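(* Let $p$ be an odd prime, $r\ge3$ with $p\nmid r$, $D=\mathrm{D}_{2r}$, and let $G=V\rtimes_\psi D$ with $V=\mathbb{Z}_p^d$ and $\psi:D\to\mathrm{GL}(V)$ irreducible and non-trivial. Let $A=\mathrm{Aut}(G)$. Then $A=\mathrm{Inn}_G(V)\rtimes\mathrm{N}_A(D)$, and $\mathrm{Inn}_G(V)\cong V$.
   Context: $\mathrm{D}_{2r}$ is the dihedral group of order $2r$; $V\rtimes_\psi D$ is the semidirect product where $D$ acts on $V=\mathbb{F}_p^d$ via the representation $\psi$ over $\mathbb{F}_p$. For $g\in G$, $\tilde g$ is the inner automorphism $h\mapsto ghg^{-1}$, and for $H\le G$, $\mathrm{Inn}_G(H)=\{\tilde h: h\in H\}\le\mathrm{Aut}(G)$. $\mathrm{N}_A(D)=\{f\in A: f(D)=D\}$. *)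

theory Defs
  imports "HOL-Algebra.Bij" "HOL-Algebra.Coset" "HOL-Computational_Algebra.Primes"
begin

definition Zp_vec :: "nat \<Rightarrow> nat \<Rightarrow> (nat \<Rightarrow> int) monoid" where
  "Zp_vec p d = \<lparr>carrier = {v. (\<forall>i<d. 0 \<le> v i \<and> v i < int p) \<and> (\<forall>i\<ge>d. v i = 0)},
                 monoid.mult = (\<lambda>v w i. (v i + w i) mod int p),
                 monoid.one = (\<lambda>i. 0)\<rparr>"

text \<open>The dihedral group of order 2r: (a, s) stands for rho^a sigma^s, where rho is a
  rotation of order r, sigma a reflection, and sigma rho = rho^(-1) sigma.\<close>
definition dihedral_group :: "nat \<Rightarrow> (int \<times> bool) monoid" where
  "dihedral_group r = \<lparr>carrier = {0..<int r} \<times> UNIV,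
     monoid.mult = (\<lambda>(a, s) (b, t). ((a + (if s then - b else b)) mod int r, s \<noteq> t)),
     monoid.one = (0, False)\<rparr>"

definition semidirect ::
  "('v, 'x) monoid_scheme \<Rightarrow> ('d, 'y) monoid_scheme \<Rightarrow> ('d \<Rightarrow> 'v \<Rightarrow> 'v) \<Rightarrow> ('v \<times> 'd) monoid" where
  "semidirect V D \<psi> = \<lparr>carrier = carrier V \<times> carrier D,
     monoid.mult = (\<lambda>(v, g) (w, h). (v \<otimes>\<^bsub>V\<^esub> \<psi> g w, g \<otimes>\<^bsub>D\<^esub> h)),
     monoid.one = (\<one>\<^bsub>V\<^esub>, \<one>\<^bsub>D\<^esub>)\<rparr>"

text \<open>psi is an irreducible representation of D on the F_p-space V (for an elementary
  abelian p-group, F_p-subspaces are exactly the subgroups).\<close>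
definition irreducible_rep :: "('d, 'y) monoid_scheme \<Rightarrow> ('v, 'x) monoid_scheme \<Rightarrow> ('d \<Rightarrow> 'v \<Rightarrow> 'v) \<Rightarrow> bool" where
  "irreducible_rep D V \<psi> \<longleftrightarrow> carrier V \<noteq> {\<one>\<^bsub>V\<^esub>} \<and>
     (\<forall>W. subgroup W V \<and> (\<forall>g\<in>carrier D. \<psi> g ` W \<subseteq> W) \<longrightarrow> W = {\<one>\<^bsub>V\<^esub>} \<or> W = carrier V)"

definition nontrivial_rep :: "('d, 'y) monoid_scheme \<Rightarrow> ('v, 'x) monoid_scheme \<Rightarrow> ('d \<Rightarrow> 'v \<Rightarrow> 'v) \<Rightarrow> bool" where
  "nontrivial_rep D V \<psi> \<longleftrightarrow> (\<exists>g\<in>carrier D. \<psi> g \<noteq> \<one>\<^bsub>AutoGroup V\<^esub>)"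

definition inner_aut :: "('a, 'b) monoid_scheme \<Rightarrow> 'a \<Rightarrow> 'a \<Rightarrow> 'a" where
  "inner_aut G g = (\<lambda>h\<in>carrier G. g \<otimes>\<^bsub>G\<^esub> h \<otimes>\<^bsub>G\<^esub> inv\<^bsub>G\<^esub> g)"

definition Inn_of :: "('a, 'b) monoid_scheme \<Rightarrow> 'a set \<Rightarrow> ('a \<Rightarrow> 'a) set" where
  "Inn_of G H = inner_aut G ` H"

definition aut_normalizer :: "('a, 'b) monoid_scheme \<Rightarrow> 'a set \<Rightarrow> ('a \<Rightarrow> 'a) set" where
  "aut_normalizer G H = {f \<in> auto G. f ` H = H}"

definition internal_semidirect :: "('a, 'b) monoid_scheme \<Rightarrow> 'a set \<Rightarrow> 'a set \<Rightarrow> bool" where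
  "internal_semidirect A N H \<longleftrightarrow> N \<lhd> A \<and> subgroup H A \<and> N \<inter> H = {\<one>\<^bsub>A\<^esub>} \<and> N <#>\<^bsub>A\<^esub> H = carrier A"

end

theory Submission
  imports Defs "HOL-Algebra.Multiplicative_Group"
begin

text \<open>
  Write \<open>G = V \<rtimes> H\<close> with \<open>V\<close> abelian of exponent \<open>p\<close> and \<open>p \<nmid> |H|\<close>.  Since \<open>G/V \<cong> H\<close>,
  the elements of order dividing \<open>p\<close> are exactly those of \<open>V\<close>, so \<open>V\<close> is characteristic and
  \<open>Inn\<^sub>G(V)\<close> is normal in \<open>A = Aut(G)\<close>.  For \<open>f \<in> A\<close>, splitting \<open>f h = c(h) \<phi>(h)\<close> with
  \<open>c(h) \<in> V\<close>, \<open>\<phi>(h) \<in> H\<close> gives a 1-cocycle \<open>c\<close>; as \<open>|H|\<close> is invertible modulo \<open>p\<close>, averaging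
  \<open>c\<close> over \<open>H\<close> produces \<open>u \<in> V\<close> with \<open>u\<^sup>-\<^sup>1 f(h) u = \<phi>(h)\<close>, so \<open>f\<close> is conjugation by \<open>u\<close> composed with an
  element of \<open>N\<^sub>A(H)\<close>.  Irreducibility and non-triviality of
  \<open>\<psi>\<close> say that no non-trivial \<open>v \<in> V\<close> is fixed by \<open>H = D\<close>; this makes \<open>Inn\<^sub>G(V) \<inter> N\<^sub>A(H)\<close>
  trivial and \<open>v \<mapsto> inner_aut v\<close> injective on \<open>V\<close>.
\<close>

lemma carrier_AutoGroup: "carrier (AutoGroup G) = auto G"
  by (simp add: AutoGroup_def)

lemma one_AutoGroup: "\<one>\<^bsub>AutoGroup G\<^esub> = (\<lambda>x\<in>carrier G. x)"
  by (simp add: AutoGroup_def BijGroup_def)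

lemma mult_AutoGroup: "f \<in> auto G \<Longrightarrow> g \<in> auto G \<Longrightarrow> f \<otimes>\<^bsub>AutoGroup G\<^esub> g = compose (carrier G) f g"
  by (simp add: AutoGroup_def BijGroup_def auto_def)

context group
begin

lemma inv_mult_cancel_left [simp]: "a \<in> carrier G \<Longrightarrow> b \<in> carrier G \<Longrightarrow> inv a \<otimes> (a \<otimes> b) = b"
  by (simp add: m_assoc[symmetric])

lemma mult_inv_cancel_left [simp]: "a \<in> carrier G \<Longrightarrow> b \<in> carrier G \<Longrightarrow> a \<otimes> (inv a \<otimes> b) = b"
  by (simp add: m_assoc[symmetric])

lemma auto_in_carrier: "f \<in> auto G \<Longrightarrow> x \<in> carrier G \<Longrightarrow> f x \<in> carrier G"
  unfolding auto_def by (blast intro: hom_in_carrier)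

lemma inner_aut_apply: "x \<in> carrier G \<Longrightarrow> inner_aut G g x = g \<otimes> x \<otimes> inv g"
  by (simp add: inner_aut_def)

lemma inner_aut_in_auto: "g \<in> carrier G \<Longrightarrow> inner_aut G g \<in> auto G"
  unfolding auto_def Bij_def
proof (intro CollectI IntI conjI)
  assume g: "g \<in> carrier G"
  show "inner_aut G g \<in> hom G G"
    using g by (auto simp: hom_def inner_aut_apply m_assoc)
  show "inner_aut G g \<in> extensional (carrier G)"
    by (simp add: inner_aut_def)
  show "bij_betw (inner_aut G g) (carrier G) (carrier G)"
    by (rule bij_betw_byWitness[where f' = "inner_aut G (inv g)"])
       (auto simp: g inner_aut_apply m_assoc)
qed

lemma inner_aut_hom: "inner_aut G \<in> hom G (AutoGroup G)"
proof (rule homI)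
  fix g h assume g: "g \<in> carrier G" and h: "h \<in> carrier G"
  show "inner_aut G (g \<otimes> h) = inner_aut G g \<otimes>\<^bsub>AutoGroup G\<^esub> inner_aut G h"
    using g h
    by (simp add: mult_AutoGroup inner_aut_in_auto)
       (auto simp: compose_def inner_aut_def m_assoc inv_mult_group)
qed (simp add: carrier_AutoGroup inner_aut_in_auto)

lemma group_hom_inner_aut: "group_hom G (AutoGroup G) (inner_aut G)"
  by (simp add: group_hom_def group_hom_axioms_def is_group AutoGroup inner_aut_hom)

lemma auto_mult_inner_aut:
  assumes f: "f \<in> auto G" and g: "g \<in> carrier G"
  shows "f \<otimes>\<^bsub>AutoGroup G\<^esub> inner_aut G g = inner_aut G (f g) \<otimes>\<^bsub>AutoGroup G\<^esub> f"
proof -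
  interpret f: group_hom G G f
    using f by (simp add: group_hom_def group_hom_axioms_def is_group auto_def)
  show ?thesis
    using f g auto_in_carrier[OF f]
    by (simp add: mult_AutoGroup inner_aut_in_auto)
       (auto simp: compose_def inner_aut_def)
qed

lemma subgroup_Inn_of: "subgroup H G \<Longrightarrow> subgroup (Inn_of G H) (AutoGroup G)"
  unfolding Inn_of_def by (rule group_hom.subgroup_img_is_subgroup[OF group_hom_inner_aut])

lemma normal_Inn_of:
  assumes H: "subgroup H G" and char: "\<And>f. f \<in> auto G \<Longrightarrow> f ` H \<subseteq> H"
  shows "Inn_of G H \<lhd> AutoGroup G"
proof -
  interpret A: group "AutoGroup G" by (rule AutoGroup)
  show ?thesis
  proof (rule A.normal_invI[OF subgroup_Inn_of[OF H]])
    fix f a assume f: "f \<in> carrier (AutoGroup G)" and "a \<in> Inn_of G H"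
    then obtain h where h: "h \<in> H" and a: "a = inner_aut G h" by (auto simp: Inn_of_def)
    have hG: "h \<in> carrier G" using H h by (rule subgroup.mem_carrier)
    have fh: "inner_aut G (f h) \<in> carrier (AutoGroup G)"
      using f hG by (simp add: carrier_AutoGroup inner_aut_in_auto auto_in_carrier)
    have "f \<otimes>\<^bsub>AutoGroup G\<^esub> a \<otimes>\<^bsub>AutoGroup G\<^esub> inv\<^bsub>AutoGroup G\<^esub> f = inner_aut G (f h)"
      using f hG fh unfolding a auto_mult_inner_aut[OF f[unfolded carrier_AutoGroup] hG]
      by (metis A.inv_closed A.m_assoc A.r_inv A.r_one)
    then show "f \<otimes>\<^bsub>AutoGroup G\<^esub> a \<otimes>\<^bsub>AutoGroup G\<^esub> inv\<^bsub>AutoGroup G\<^esub> f \<in> Inn_of G H"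
      using char f h by (auto simp: Inn_of_def carrier_AutoGroup)
  qed
qed

lemma one_in_aut_normalizer: "H \<subseteq> carrier G \<Longrightarrow> \<one>\<^bsub>AutoGroup G\<^esub> \<in> aut_normalizer G H"
  by (auto simp: aut_normalizer_def one_AutoGroup id_in_auto[simplified] image_ident subset_iff)

lemma subgroup_aut_normalizer:
  assumes H: "H \<subseteq> carrier G"
  shows "subgroup (aut_normalizer G H) (AutoGroup G)"
proof -
  interpret A: group "AutoGroup G" by (rule AutoGroup)
  show ?thesis
  proof (rule A.subgroupI)
    show "aut_normalizer G H \<subseteq> carrier (AutoGroup G)"
      by (auto simp: aut_normalizer_def carrier_AutoGroup)
    show "aut_normalizer G H \<noteq> {}"
      using one_in_aut_normalizer[OF H] by blast
  next
    fix f assume "f \<in> aut_normalizer G H"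
    then have f: "f \<in> carrier (AutoGroup G)" and fH: "f ` H = H"
      by (auto simp: aut_normalizer_def carrier_AutoGroup)
    define g where "g = inv\<^bsub>AutoGroup G\<^esub> f"
    have "compose (carrier G) g f = (\<lambda>x\<in>carrier G. x)"
      using A.l_inv[OF f] A.inv_closed[OF f] f
      by (simp add: g_def carrier_AutoGroup mult_AutoGroup one_AutoGroup)
    then have "g (f x) = x" if "x \<in> H" for x
      using H that by (metis compose_eq restrict_apply' subsetD)
    then have "g ` H = H"
      by (subst (1) fH[symmetric]) (simp add: image_image)
    then show "inv\<^bsub>AutoGroup G\<^esub> f \<in> aut_normalizer G H"
      using A.inv_closed[OF f] by (simp add: aut_normalizer_def g_def carrier_AutoGroup)
  next
    fix f g assume "f \<in> aut_normalizer G H" "g \<in> aut_normalizer G H"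
    then have f: "f \<in> auto G" "f ` H = H" and g: "g \<in> auto G" "g ` H = H"
      by (auto simp: aut_normalizer_def)
    have "compose (carrier G) f g ` H = f ` g ` H"
      using H by (force simp: compose_def)
    then show "f \<otimes>\<^bsub>AutoGroup G\<^esub> g \<in> aut_normalizer G H"
      using f g A.m_closed[of f g] by (simp add: aut_normalizer_def carrier_AutoGroup mult_AutoGroup)
  qed
qed

lemma aut_normalizer_finiteI:
  assumes "finite H" "H \<subseteq> carrier G" "f \<in> auto G" "f ` H \<subseteq> H"
  shows "f \<in> aut_normalizer G H"
proof -
  have "inj_on f H"
    using assms(2,3) by (auto simp: auto_def Bij_def bij_betw_def intro: inj_on_subset)
  then show ?thesis
    using endo_inj_surj[OF assms(1,4)] assms(3) by (simp add: aut_normalizer_def)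
qed

lemma conj_nat_pow:
  "g \<in> carrier G \<Longrightarrow> x \<in> carrier G \<Longrightarrow> (g \<otimes> x \<otimes> inv g) [^] (n::nat) = g \<otimes> x [^] n \<otimes> inv g"
  by (induction n) (simp_all add: m_assoc)

lemma subgroup_nat_pow_closed: "subgroup H G \<Longrightarrow> x \<in> H \<Longrightarrow> x [^] (n::nat) \<in> H"
  by (induction n) (simp_all add: subgroup.one_closed subgroup.m_closed)

lemma subgroup_pow_card_eq_one:
  assumes H: "subgroup H G" and "finite H" and h: "h \<in> H"
  shows "h [^] card H = \<one>"
proof -
  interpret H: group "G\<lparr>carrier := H\<rparr>"
    using subgroup.subgroup_is_group[OF H is_group] .
  show ?thesis
    using H.pow_order_eq_1[of h] nat_pow_consistent[of h "card H" H] assms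
    by (simp add: order_def)
qed

lemma pow_coprime_eq_one:
  assumes x: "x \<in> carrier G" and "x [^] (m::nat) = \<one>" "x [^] (n::nat) = \<one>" "coprime m n"
  shows "x = \<one>"
  using assms coprime_common_divisor_nat[of m n "ord x"] pow_eq_id[OF x] ord_eq_1[OF x] by simp

end

locale coprime_abelian_complement = group G for G (structure) +
  fixes V H :: "'a set" and p :: nat
  assumes V_normal: "V \<lhd> G"
    and V_comm: "\<And>x y. x \<in> V \<Longrightarrow> y \<in> V \<Longrightarrow> x \<otimes> y = y \<otimes> x"
    and V_exponent: "\<And>x. x \<in> V \<Longrightarrow> x [^] p = \<one>"
    and H_subgroup: "subgroup H G"
    and H_finite: "finite H"
    and V_inter_H: "V \<inter> H = {\<one>}"
    and V_mult_H: "V <#> H = carrier G"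
    and coprime_p_card_H: "coprime p (card H)"
    and V_centralizer_H: "\<And>v. v \<in> V \<Longrightarrow> (\<And>h. h \<in> H \<Longrightarrow> v \<otimes> h = h \<otimes> v) \<Longrightarrow> v = \<one>"
begin

sublocale V: normal V G by (rule V_normal)
sublocale H: subgroup H G by (rule H_subgroup)

lemmas V_nat_pow_closed = subgroup_nat_pow_closed[OF V.subgroup_axioms]

abbreviation V_group where "V_group \<equiv> G\<lparr>carrier := V\<rparr>"

lemma comm_group_V: "comm_group V_group"
  using V.subgroup_is_group[OF is_group] V_comm by (auto intro: group.group_comm_groupI)

definition H_part :: "'a \<Rightarrow> 'a" where
  "H_part x = (THE h. h \<in> H \<and> x \<otimes> inv h \<in> V)"

lemma H_part_unique:
  assumes x: "x \<in> carrier G" and "h \<in> H" "k \<in> H" "x \<otimes> inv h \<in> V" "x \<otimes> inv k \<in> V"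
  shows "h = k"
proof -
  have hk: "h \<in> carrier G" "k \<in> carrier G" using assms by auto
  have "inv (x \<otimes> inv h) \<otimes> (x \<otimes> inv k) = h \<otimes> inv k"
    using x hk by (simp add: inv_mult_group m_assoc)
  moreover have "inv (x \<otimes> inv h) \<otimes> (x \<otimes> inv k) \<in> V" "h \<otimes> inv k \<in> H"
    using assms by auto
  ultimately have "h \<otimes> inv k = \<one>" using V_inter_H by auto
  then show ?thesis using hk by (simp add: inv_solve_right')
qed

lemma H_part:
  assumes x: "x \<in> carrier G"
  shows "H_part x \<in> H" and "x \<otimes> inv (H_part x) \<in> V"
proof -
  have "x \<in> V <#> H" using x V_mult_H by simp
  then obtain v h where "v \<in> V" "h \<in> H" "x = v \<otimes> h"
    unfolding set_mult_def by blast
  then have h: "h \<in> H \<and> x \<otimes> inv h \<in> V" by (simp add: m_assoc)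
  have "H_part x = h"
    unfolding H_part_def
  proof (rule the_equality)
    show "h \<in> H \<and> x \<otimes> inv h \<in> V" by (rule h)
  next
    fix k assume "k \<in> H \<and> x \<otimes> inv k \<in> V"
    then show "k = h" using H_part_unique[OF x, of k h] h by simp
  qed
  then show "H_part x \<in> H" and "x \<otimes> inv (H_part x) \<in> V" using h by simp_all
qed

lemma H_part_eq:
  assumes "x \<in> carrier G" "h \<in> H" "x \<otimes> inv h \<in> V"
  shows "H_part x = h"
  using H_part_unique[OF assms(1) H_part(1)[OF assms(1)] assms(2) H_part(2)[OF assms(1)] assms(3)] .

lemma H_part_one: "H_part \<one> = \<one>"
  by (rule H_part_eq) simp_all

lemma H_part_mult:
  assumes x: "x \<in> carrier G" and y: "y \<in> carrier G"
  shows "H_part (x \<otimes> y) = H_part x \<otimes> H_part y"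
proof (rule H_part_eq)
  let ?h = "H_part x" and ?k = "H_part y"
  have hk: "?h \<in> carrier G" "?k \<in> carrier G" using H_part x y by auto
  have "x \<otimes> y \<otimes> inv (?h \<otimes> ?k) = (x \<otimes> inv ?h) \<otimes> (?h \<otimes> (y \<otimes> inv ?k) \<otimes> inv ?h)"
    using x y hk by (simp add: inv_mult_group m_assoc)
  also have "\<dots> \<in> V"
    using H_part x y hk by (simp add: V.inv_op_closed2)
  finally show "x \<otimes> y \<otimes> inv (?h \<otimes> ?k) \<in> V" .
qed (use x y H_part in auto)

lemma H_part_pow: "x \<in> carrier G \<Longrightarrow> H_part (x [^] (n::nat)) = H_part x [^] n"
  by (induction n) (simp_all add: H_part_one H_part_mult)

lemma exponent_p_imp_in_V:
  assumes x: "x \<in> carrier G" and "x [^] p = \<one>"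
  shows "x \<in> V"
proof -
  have "H_part x [^] p = \<one>"
    using assms by (simp add: H_part_pow[symmetric] H_part_one)
  moreover have "H_part x [^] card H = \<one>"
    using subgroup_pow_card_eq_one[OF H_subgroup H_finite] H_part(1)[OF x] .
  ultimately have "H_part x = \<one>"
    using pow_coprime_eq_one[OF _ _ _ coprime_p_card_H] H_part(1)[OF x] by simp
  then show ?thesis using H_part(2)[OF x] x by simp
qed

lemma auto_image_V: "f \<in> auto G \<Longrightarrow> f ` V \<subseteq> V"
proof
  fix y assume f: "f \<in> auto G" and "y \<in> f ` V"
  then obtain x where x: "x \<in> V" and y: "y = f x" by blast
  interpret f: group_hom G G f
    using f by (simp add: group_hom_def group_hom_axioms_def auto_def)
  have "f x [^] p = \<one>"
    using x V_exponent by (simp flip: f.hom_nat_pow)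
  then show "y \<in> V"
    using exponent_p_imp_in_V[OF auto_in_carrier[OF f]] x y by simp
qed

lemma finprod_conj:
  assumes "finite A" and g: "g \<in> carrier G" and "F \<in> A \<rightarrow> V"
  shows "finprod V_group (\<lambda>k. g \<otimes> F k \<otimes> inv g) A = g \<otimes> finprod V_group F A \<otimes> inv g"
  using assms(1,3)
proof (induction A rule: finite_induct)
  case empty
  interpret W: comm_group V_group by (rule comm_group_V)
  show ?case using g by simp
next
  case (insert a A)
  interpret W: comm_group V_group by (rule comm_group_V)
  have F: "F \<in> A \<rightarrow> V" "F a \<in> V" and P: "finprod V_group F A \<in> V"
    using insert.prems W.finprod_closed[of F A] by auto
  have "finprod V_group (\<lambda>k. g \<otimes> F k \<otimes> inv g) (insert a A)
      = (g \<otimes> F a \<otimes> inv g) \<otimes> finprod V_group (\<lambda>k. g \<otimes> F k \<otimes> inv g) A"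
    using W.finprod_insert[of A a "\<lambda>k. g \<otimes> F k \<otimes> inv g"] insert.hyps F g
    by (simp add: Pi_def V.inv_op_closed2)
  also have "\<dots> = g \<otimes> (F a \<otimes> finprod V_group F A) \<otimes> inv g"
    using insert.IH F P g by (simp add: m_assoc)
  also have "\<dots> = g \<otimes> finprod V_group F (insert a A) \<otimes> inv g"
    using W.finprod_insert[of A a F] insert.hyps F by simp
  finally show ?case .
qed

lemma pow_card_H_invertible: "\<exists>a::nat. \<forall>v\<in>V. (v [^] card H) [^] a = v"
proof -
  have "card H \<noteq> 0" using H_finite H.one_closed card_0_eq by blast
  then obtain a b where ab: "card H * a = p * b + gcd (card H) p"
    using bezout_nat by blast
  then have ab: "card H * a = p * b + 1"
    using coprime_p_card_H by (metis coprime_iff_gcd_eq_1 gcd.commute)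
  have "(v [^] card H) [^] a = v" if v: "v \<in> V" for v
  proof -
    have vG: "v \<in> carrier G" using v by (rule V.mem_carrier)
    have "(v [^] card H) [^] a = v [^] (p * b + 1)"
      by (simp only: nat_pow_pow[OF vG] ab)
    also have "\<dots> = (v [^] p) [^] b \<otimes> v [^] (1::nat)"
      by (simp only: nat_pow_pow[OF vG] nat_pow_mult[OF vG])
    also have "\<dots> = v"
      using vG V_exponent[OF v] by simp
    finally show ?thesis .
  qed
  then show ?thesis by blast
qed

lemma finprod_cocycle:
  assumes c: "c \<in> H \<rightarrow> V" and \<phi>h: "\<phi> h \<in> carrier G" and h: "h \<in> H"
    and cocycle: "\<And>k. k \<in> H \<Longrightarrow> c (h \<otimes> k) = c h \<otimes> (\<phi> h \<otimes> c k \<otimes> inv (\<phi> h))"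
  shows "finprod V_group c H = c h [^] card H \<otimes> (\<phi> h \<otimes> finprod V_group c H \<otimes> inv (\<phi> h))"
proof -
  interpret W: comm_group V_group by (rule comm_group_V)
  have "(\<lambda>k. h \<otimes> k) ` H = H"
    using coset_join3[OF _ H_subgroup h] h by (simp add: l_coset_def UNION_singleton_eq_range)
  moreover have "inj_on (\<lambda>k. h \<otimes> k) H"
    using inj_on_cmult[of h] h by (auto intro: inj_on_subset)
  ultimately have "finprod V_group c H = finprod V_group (\<lambda>k. c (h \<otimes> k)) H"
    using W.finprod_reindex[of c "\<lambda>k. h \<otimes> k" H] c by simp
  also have "\<dots> = finprod V_group (\<lambda>k. c h \<otimes>\<^bsub>V_group\<^esub> (\<phi> h \<otimes> c k \<otimes> inv (\<phi> h))) H"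
    using c h \<phi>h
    by (intro W.finprod_cong') (auto simp: cocycle Pi_iff V.inv_op_closed2 intro!: V.m_closed)
  also have "\<dots> = finprod V_group (\<lambda>k. c h) H
      \<otimes>\<^bsub>V_group\<^esub> finprod V_group (\<lambda>k. \<phi> h \<otimes> c k \<otimes> inv (\<phi> h)) H"
    using c h \<phi>h by (intro W.finprod_multf) (auto simp: Pi_iff V.inv_op_closed2)
  also have "\<dots> = c h [^] card H \<otimes> (\<phi> h \<otimes> finprod V_group c H \<otimes> inv (\<phi> h))"
    using c h \<phi>h W.finprod_const[of "c h" H] nat_pow_consistent[of "c h" "card H" V]
      finprod_conj[OF H_finite \<phi>h c]
    by (auto simp: Pi_def V.inv_op_closed2)
  finally show ?thesis .
qed

text \<open>A twisted form of the vanishing of \<open>H\<^sup>1(H, V)\<close> for \<open>p \<nmid> |H|\<close>: in the application,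
  \<open>\<phi> h\<close> is the \<open>H\<close>-component of \<open>f h\<close> rather than \<open>h\<close> itself.  The witness is
  \<open>u = (\<Prod>\<^sub>h c h)\<^bsup>a\<^esup>\<close> with \<open>a\<close> an inverse of \<open>|H|\<close> modulo \<open>p\<close>.\<close>

lemma cocycle_is_coboundary:
  assumes c: "c \<in> H \<rightarrow> V" and \<phi>: "\<phi> \<in> H \<rightarrow> carrier G"
    and cocycle: "\<And>h k. h \<in> H \<Longrightarrow> k \<in> H \<Longrightarrow> c (h \<otimes> k) = c h \<otimes> (\<phi> h \<otimes> c k \<otimes> inv (\<phi> h))"
  shows "\<exists>u\<in>V. \<forall>h\<in>H. c h \<otimes> (\<phi> h \<otimes> u \<otimes> inv (\<phi> h)) = u"
proof -
  interpret W: comm_group V_group by (rule comm_group_V)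
  define S where "S = finprod V_group c H"
  have S: "S \<in> V" using W.finprod_closed[of c H] c by (simp add: S_def)
  obtain a :: nat where a: "\<And>v. v \<in> V \<Longrightarrow> (v [^] card H) [^] a = v"
    using pow_card_H_invertible by blast
  define u where "u = S [^] a"
  have u: "u \<in> V" using S by (simp add: u_def V_nat_pow_closed)
  have "c h \<otimes> (\<phi> h \<otimes> u \<otimes> inv (\<phi> h)) = u" if h: "h \<in> H" for h
  proof -
    have \<phi>h: "\<phi> h \<in> carrier G" using \<phi> h by blast
    have ch: "c h \<in> V" using c h by blast
    have "u = (c h [^] card H \<otimes> (\<phi> h \<otimes> S \<otimes> inv (\<phi> h))) [^] a"
      using finprod_cocycle[of c \<phi> h, OF c \<phi>h h cocycle[OF h]] by (simp add: u_def S_def)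
    also have "\<dots> = (c h [^] card H) [^] a \<otimes> (\<phi> h \<otimes> S \<otimes> inv (\<phi> h)) [^] a"
      using ch S \<phi>h
      by (intro pow_mult_distrib) (auto simp: V_comm V_nat_pow_closed V.inv_op_closed2)
    also have "\<dots> = c h \<otimes> (\<phi> h \<otimes> u \<otimes> inv (\<phi> h))"
      using a[OF ch] S \<phi>h by (simp add: conj_nat_pow u_def)
    finally show ?thesis by simp
  qed
  then show ?thesis using u by blast
qed

lemma conjugate_into_H:
  assumes f: "f \<in> hom G G"
  shows "\<exists>u\<in>V. \<forall>h\<in>H. inv u \<otimes> f h \<otimes> u \<in> H"
proof -
  define \<phi> where "\<phi> h = H_part (f h)" for h
  define c where "c h = f h \<otimes> inv (\<phi> h)" for h
  have fh: "f h \<in> carrier G" if "h \<in> H" for h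
    using hom_in_carrier[OF f] that by simp
  have \<phi>: "\<phi> h \<in> H" "\<phi> h \<in> carrier G" if "h \<in> H" for h
    using H_part(1)[OF fh[OF that]] by (simp_all add: \<phi>_def)
  have c: "c h \<in> V" if "h \<in> H" for h
    using H_part(2)[OF fh[OF that]] by (simp add: c_def \<phi>_def)
  have cocycle: "c (h \<otimes> k) = c h \<otimes> (\<phi> h \<otimes> c k \<otimes> inv (\<phi> h))" if "h \<in> H" "k \<in> H" for h k
    using that fh \<phi> hom_mult[OF f]
    by (simp add: c_def \<phi>_def H_part_mult inv_mult_group m_assoc)
  obtain u where u: "u \<in> V"
    and fixed: "\<And>h. h \<in> H \<Longrightarrow> c h \<otimes> (\<phi> h \<otimes> u \<otimes> inv (\<phi> h)) = u"
    using cocycle_is_coboundary[OF _ _ cocycle] c \<phi>(2) by (metis Pi_I)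
  show ?thesis
  proof (intro bexI ballI)
    fix h assume h: "h \<in> H"
    have uG: "u \<in> carrier G" using u by (rule V.mem_carrier)
    have fuG: "f h \<otimes> u \<in> carrier G" using fh[OF h] uG by simp
    have "u = f h \<otimes> u \<otimes> inv (\<phi> h)"
      using fixed[OF h] fh[OF h] \<phi>[OF h] uG by (simp add: c_def m_assoc)
    then have "f h \<otimes> u = u \<otimes> \<phi> h"
      using inv_solve_right[OF uG fuG \<phi>(2)[OF h]] by blast
    then have "\<phi> h = inv u \<otimes> (f h \<otimes> u)"
      using inv_solve_left[OF \<phi>(2)[OF h] uG fuG] by blast
    then have "inv u \<otimes> f h \<otimes> u = \<phi> h"
      using fh[OF h] uG by (simp add: m_assoc)
    then show "inv u \<otimes> f h \<otimes> u \<in> H" using \<phi>[OF h] by simp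
  qed (rule u)
qed

lemma normalizes_H_imp_one:
  assumes v: "v \<in> V" and vH: "\<And>h. h \<in> H \<Longrightarrow> v \<otimes> h \<otimes> inv v \<in> H"
  shows "v = \<one>"
proof (rule V_centralizer_H[OF v])
  fix h assume h: "h \<in> H"
  have vG: "v \<in> carrier G" and hG: "h \<in> carrier G" using v h by auto
  define x where "x = v \<otimes> h \<otimes> inv (h \<otimes> v)"
  have "x = v \<otimes> h \<otimes> inv v \<otimes> inv h" using vG hG by (simp add: x_def inv_mult_group m_assoc)
  then have "x \<in> H" using vH[OF h] h by simp
  moreover have "x = v \<otimes> (h \<otimes> inv v \<otimes> inv h)" using vG hG by (simp add: x_def inv_mult_group m_assoc)
  then have "x \<in> V" using v vG hG by (simp add: V.inv_op_closed2)
  ultimately have "x = \<one>" using V_inter_H by blast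
  then show "v \<otimes> h = h \<otimes> v"
    using inv_solve_right'[of \<one> "v \<otimes> h" "h \<otimes> v"] vG hG by (simp add: x_def)
qed

lemma Inn_of_V_inter_aut_normalizer: "Inn_of G V \<inter> aut_normalizer G H = {\<one>\<^bsub>AutoGroup G\<^esub>}"
proof -
  interpret inn: group_hom G "AutoGroup G" "inner_aut G" by (rule group_hom_inner_aut)
  have "a = \<one>\<^bsub>AutoGroup G\<^esub>" if a_mem: "a \<in> Inn_of G V \<inter> aut_normalizer G H" for a
  proof -
    obtain v where v: "v \<in> V" and a: "a = inner_aut G v" and vH: "inner_aut G v ` H = H"
      using a_mem by (auto simp: Inn_of_def aut_normalizer_def)
    have "v = \<one>"
    proof (rule normalizes_H_imp_one[OF v])
      fix h assume h: "h \<in> H"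
      then have "inner_aut G v h \<in> H" using vH by (metis imageI)
      then show "v \<otimes> h \<otimes> inv v \<in> H" using h by (simp add: inner_aut_apply)
    qed
    then show ?thesis by (simp add: a)
  qed
  moreover have "\<one>\<^bsub>AutoGroup G\<^esub> \<in> Inn_of G V"
    using inn.hom_one by (metis Inn_of_def V.one_closed imageI)
  ultimately show ?thesis
    using one_in_aut_normalizer[OF H.subset] by blast
qed

lemma Inn_of_V_mult_aut_normalizer:
  "Inn_of G V <#>\<^bsub>AutoGroup G\<^esub> aut_normalizer G H = carrier (AutoGroup G)"
proof
  interpret A: group "AutoGroup G" by (rule AutoGroup)
  show "Inn_of G V <#>\<^bsub>AutoGroup G\<^esub> aut_normalizer G H \<subseteq> carrier (AutoGroup G)"
    using subgroup.subset[OF subgroup_Inn_of[OF V.subgroup_axioms]]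
      subgroup.subset[OF subgroup_aut_normalizer[OF H.subset]]
    by (auto simp: set_mult_def)
  show "carrier (AutoGroup G) \<subseteq> Inn_of G V <#>\<^bsub>AutoGroup G\<^esub> aut_normalizer G H"
  proof
    fix f assume f: "f \<in> carrier (AutoGroup G)"
    obtain u where u: "u \<in> V" and uH: "\<And>h. h \<in> H \<Longrightarrow> inv u \<otimes> f h \<otimes> u \<in> H"
      using conjugate_into_H[of f] f by (auto simp: carrier_AutoGroup auto_def)
    have uG: "u \<in> carrier G" using u by (rule V.mem_carrier)
    have inn: "inner_aut G u \<in> carrier (AutoGroup G)" "inner_aut G (inv u) \<in> carrier (AutoGroup G)"
      using uG by (simp_all add: carrier_AutoGroup inner_aut_in_auto)
    define g where "g = inner_aut G (inv u) \<otimes>\<^bsub>AutoGroup G\<^esub> f"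
    have g: "g \<in> auto G" using A.m_closed[OF inn(2) f] by (simp add: g_def carrier_AutoGroup)
    have "g h = inv u \<otimes> f h \<otimes> u" if "h \<in> H" for h
      using inn f that uG auto_in_carrier[of f h]
      by (simp add: g_def carrier_AutoGroup mult_AutoGroup compose_def inner_aut_apply)
    then have "g \<in> aut_normalizer G H"
      using aut_normalizer_finiteI[OF H_finite H.subset g] uH by auto
    moreover have "f = inner_aut G u \<otimes>\<^bsub>AutoGroup G\<^esub> g"
    proof -
      have "inner_aut G u \<otimes>\<^bsub>AutoGroup G\<^esub> inner_aut G (inv u) = \<one>\<^bsub>AutoGroup G\<^esub>"
        using hom_mult[OF inner_aut_hom uG inv_closed[OF uG]] uG
          group_hom.hom_one[OF group_hom_inner_aut] by simp
      then show ?thesis using inn f by (simp add: g_def A.m_assoc[symmetric])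
    qed
    moreover have "inner_aut G u \<in> Inn_of G V" using u by (simp add: Inn_of_def)
    ultimately show "f \<in> Inn_of G V <#>\<^bsub>AutoGroup G\<^esub> aut_normalizer G H"
      unfolding set_mult_def by blast
  qed
qed

theorem internal_semidirect_Inn_of_aut_normalizer:
  "internal_semidirect (AutoGroup G) (Inn_of G V) (aut_normalizer G H)"
  unfolding internal_semidirect_def
  using normal_Inn_of[OF V.subgroup_axioms auto_image_V] subgroup_aut_normalizer[OF H.subset]
    Inn_of_V_inter_aut_normalizer Inn_of_V_mult_aut_normalizer
  by blast

theorem V_iso_Inn_of: "V_group \<cong> (AutoGroup G)\<lparr>carrier := Inn_of G V\<rparr>"
proof -
  interpret A: group "AutoGroup G" by (rule AutoGroup)
  have "inner_aut G \<in> hom V_group ((AutoGroup G)\<lparr>carrier := Inn_of G V\<rparr>)"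
    using hom_mult[OF inner_aut_hom] by (auto simp: hom_def Inn_of_def)
  then interpret inn: group_hom V_group "(AutoGroup G)\<lparr>carrier := Inn_of G V\<rparr>" "inner_aut G"
    using V.subgroup_is_group[OF is_group] A.subgroup_imp_group[OF subgroup_Inn_of[OF V.subgroup_axioms]]
    by (simp add: group_hom_def group_hom_axioms_def)
  have "inner_aut G \<in> iso V_group ((AutoGroup G)\<lparr>carrier := Inn_of G V\<rparr>)"
  proof (rule inn.iso_iff[THEN iffD2], intro conjI ballI impI)
    show "carrier ((AutoGroup G)\<lparr>carrier := Inn_of G V\<rparr>) \<subseteq> inner_aut G ` carrier V_group"
      by (simp add: Inn_of_def)
    fix v assume v: "v \<in> carrier V_group"
      and "inner_aut G v = \<one>\<^bsub>(AutoGroup G)\<lparr>carrier := Inn_of G V\<rparr>\<^esub>"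
    then have "inner_aut G v h = h" if "h \<in> H" for h
      using that by (simp add: one_AutoGroup)
    then have "v = \<one>"
      using normalizes_H_imp_one[of v] v by (simp add: inner_aut_apply)
    then show "v = \<one>\<^bsub>V_group\<^esub>" by simp
  qed
  then show ?thesis by (rule is_isoI)
qed

end

locale semidirect_product = V: group V + D: group D
  for V :: "('v, 'x) monoid_scheme" and D :: "('d, 'y) monoid_scheme" +
  fixes \<psi> :: "'d \<Rightarrow> 'v \<Rightarrow> 'v"
  assumes \<psi>_hom: "\<psi> \<in> hom D (AutoGroup V)"
begin

abbreviation SD where "SD \<equiv> semidirect V D \<psi>"

lemma \<psi>_auto: "g \<in> carrier D \<Longrightarrow> \<psi> g \<in> auto V"
  using hom_in_carrier[OF \<psi>_hom] by (simp add: carrier_AutoGroup)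

lemma \<psi>_closed [simp]: "g \<in> carrier D \<Longrightarrow> v \<in> carrier V \<Longrightarrow> \<psi> g v \<in> carrier V"
  using \<psi>_auto V.auto_in_carrier by blast

lemma \<psi>_hom_mult:
  assumes "g \<in> carrier D" "h \<in> carrier D" "v \<in> carrier V"
  shows "\<psi> (g \<otimes>\<^bsub>D\<^esub> h) v = \<psi> g (\<psi> h v)"
  using hom_mult[OF \<psi>_hom assms(1,2)] \<psi>_auto assms by (simp add: mult_AutoGroup compose_def)

lemma \<psi>_hom_one [simp]: "v \<in> carrier V \<Longrightarrow> \<psi> \<one>\<^bsub>D\<^esub> v = v"
  using hom_one[OF \<psi>_hom D.is_group V.AutoGroup] by (simp add: one_AutoGroup)

lemma \<psi>_auto_mult [simp]:
  "g \<in> carrier D \<Longrightarrow> v \<in> carrier V \<Longrightarrow> w \<in> carrier V \<Longrightarrow> \<psi> g (v \<otimes>\<^bsub>V\<^esub> w) = \<psi> g v \<otimes>\<^bsub>V\<^esub> \<psi> g w"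
  using \<psi>_auto by (simp add: auto_def hom_mult)

lemma \<psi>_auto_one [simp]: "g \<in> carrier D \<Longrightarrow> \<psi> g \<one>\<^bsub>V\<^esub> = \<one>\<^bsub>V\<^esub>"
  using \<psi>_auto by (simp add: auto_def hom_one)

lemma semidirect_simps [simp]:
  "carrier SD = carrier V \<times> carrier D"
  "(v, g) \<otimes>\<^bsub>SD\<^esub> (w, h) = (v \<otimes>\<^bsub>V\<^esub> \<psi> g w, g \<otimes>\<^bsub>D\<^esub> h)"
  "\<one>\<^bsub>SD\<^esub> = (\<one>\<^bsub>V\<^esub>, \<one>\<^bsub>D\<^esub>)"
  by (simp_all add: semidirect_def)

lemma group_semidirect: "group SD"
proof (rule groupI)
  fix x y z assume "x \<in> carrier SD" "y \<in> carrier SD" "z \<in> carrier SD"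
  then show "x \<otimes>\<^bsub>SD\<^esub> y \<otimes>\<^bsub>SD\<^esub> z = x \<otimes>\<^bsub>SD\<^esub> (y \<otimes>\<^bsub>SD\<^esub> z)"
    by (auto simp: \<psi>_hom_mult V.m_assoc D.m_assoc)
next
  fix x assume "x \<in> carrier SD"
  then obtain v g where x: "x = (v, g)" "v \<in> carrier V" "g \<in> carrier D" by auto
  then have "(\<psi> (inv\<^bsub>D\<^esub> g) (inv\<^bsub>V\<^esub> v), inv\<^bsub>D\<^esub> g) \<otimes>\<^bsub>SD\<^esub> x = \<one>\<^bsub>SD\<^esub>"
    by (simp add: \<psi>_auto_mult[symmetric] del: \<psi>_auto_mult)
  then show "\<exists>y\<in>carrier SD. y \<otimes>\<^bsub>SD\<^esub> x = \<one>\<^bsub>SD\<^esub>"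
    using x by force
qed auto

sublocale SD: group SD by (rule group_semidirect)

lemma snd_hom: "snd \<in> hom SD D"
  by (rule homI) auto

lemma kernel_snd: "kernel SD D snd = carrier V \<times> {\<one>\<^bsub>D\<^esub>}"
  by (auto simp: kernel_def)

lemma normal_V: "carrier V \<times> {\<one>\<^bsub>D\<^esub>} \<lhd> SD"
  using group_hom.normal_kernel[of SD D snd] snd_hom
  by (simp add: kernel_snd group_hom_def group_hom_axioms_def)

lemma subgroup_D: "subgroup ({\<one>\<^bsub>V\<^esub>} \<times> carrier D) SD"
proof (rule SD.subgroupI)
  fix x assume "x \<in> {\<one>\<^bsub>V\<^esub>} \<times> carrier D"
  then obtain g where x: "x = (\<one>\<^bsub>V\<^esub>, g)" "g \<in> carrier D" by auto
  then have "inv\<^bsub>SD\<^esub> x = (\<one>\<^bsub>V\<^esub>, inv\<^bsub>D\<^esub> g)"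
    by (intro SD.inv_equality) auto
  then show "inv\<^bsub>SD\<^esub> x \<in> {\<one>\<^bsub>V\<^esub>} \<times> carrier D" using x by simp
qed auto

lemma V_mult_D: "(carrier V \<times> {\<one>\<^bsub>D\<^esub>}) <#>\<^bsub>SD\<^esub> ({\<one>\<^bsub>V\<^esub>} \<times> carrier D) = carrier SD"
proof
  show "(carrier V \<times> {\<one>\<^bsub>D\<^esub>}) <#>\<^bsub>SD\<^esub> ({\<one>\<^bsub>V\<^esub>} \<times> carrier D) \<subseteq> carrier SD"
    by (auto simp: set_mult_def)
  show "carrier SD \<subseteq> (carrier V \<times> {\<one>\<^bsub>D\<^esub>}) <#>\<^bsub>SD\<^esub> ({\<one>\<^bsub>V\<^esub>} \<times> carrier D)"
  proof
    fix x assume "x \<in> carrier SD"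
    then obtain v g where x: "x = (v, g)" "v \<in> carrier V" "g \<in> carrier D" by auto
    then have "x = (v, \<one>\<^bsub>D\<^esub>) \<otimes>\<^bsub>SD\<^esub> (\<one>\<^bsub>V\<^esub>, g)" by simp
    then show "x \<in> (carrier V \<times> {\<one>\<^bsub>D\<^esub>}) <#>\<^bsub>SD\<^esub> ({\<one>\<^bsub>V\<^esub>} \<times> carrier D)"
      using x unfolding set_mult_def by blast
  qed
qed

lemma iso_V: "V \<cong> SD\<lparr>carrier := carrier V \<times> {\<one>\<^bsub>D\<^esub>}\<rparr>"
proof (rule is_isoI)
  show "(\<lambda>v. (v, \<one>\<^bsub>D\<^esub>)) \<in> iso V (SD\<lparr>carrier := carrier V \<times> {\<one>\<^bsub>D\<^esub>}\<rparr>)"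
    by (auto simp: iso_def hom_def bij_betw_def inj_on_def)
qed

lemma pow_V: "v \<in> carrier V \<Longrightarrow> (v, \<one>\<^bsub>D\<^esub>) [^]\<^bsub>SD\<^esub> (n::nat) = (v [^]\<^bsub>V\<^esub> n, \<one>\<^bsub>D\<^esub>)"
  by (induction n) simp_all

lemma coprime_abelian_complement_semidirect:
  assumes "comm_group V"
    and exponent: "\<And>v. v \<in> carrier V \<Longrightarrow> v [^]\<^bsub>V\<^esub> p = \<one>\<^bsub>V\<^esub>"
    and "finite (carrier D)" and "coprime p (card (carrier D))"
    and no_fixed_points: "\<And>v. v \<in> carrier V \<Longrightarrow> (\<And>g. g \<in> carrier D \<Longrightarrow> \<psi> g v = v) \<Longrightarrow> v = \<one>\<^bsub>V\<^esub>"
  shows "coprime_abelian_complement SD (carrier V \<times> {\<one>\<^bsub>D\<^esub>}) ({\<one>\<^bsub>V\<^esub>} \<times> carrier D) p"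
proof (intro coprime_abelian_complement.intro coprime_abelian_complement_axioms.intro)
  fix x y assume "x \<in> carrier V \<times> {\<one>\<^bsub>D\<^esub>}" "y \<in> carrier V \<times> {\<one>\<^bsub>D\<^esub>}"
  then show "x \<otimes>\<^bsub>SD\<^esub> y = y \<otimes>\<^bsub>SD\<^esub> x"
    using comm_monoid.m_comm[OF comm_group.axioms(1)[OF assms(1)]] by auto
next
  fix x assume "x \<in> carrier V \<times> {\<one>\<^bsub>D\<^esub>}"
  then show "x [^]\<^bsub>SD\<^esub> p = \<one>\<^bsub>SD\<^esub>"
    using exponent by (auto simp: pow_V)
next
  show "coprime p (card ({\<one>\<^bsub>V\<^esub>} \<times> carrier D))"
    using assms(4) by (simp add: card_cartesian_product)
next
  fix x assume x: "x \<in> carrier V \<times> {\<one>\<^bsub>D\<^esub>}"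
    and comm: "\<And>h. h \<in> {\<one>\<^bsub>V\<^esub>} \<times> carrier D \<Longrightarrow> x \<otimes>\<^bsub>SD\<^esub> h = h \<otimes>\<^bsub>SD\<^esub> x"
  then obtain v where v: "x = (v, \<one>\<^bsub>D\<^esub>)" "v \<in> carrier V" by auto
  have "\<psi> g v = v" if "g \<in> carrier D" for g
    using comm[of "(\<one>\<^bsub>V\<^esub>, g)"] v that by simp
  then show "x = \<one>\<^bsub>SD\<^esub>" using no_fixed_points v by simp
qed (use group_semidirect normal_V subgroup_D V_mult_D assms(3) in auto)

lemma no_fixed_points_if_irreducible:
  assumes irr: "irreducible_rep D V \<psi>" and nontriv: "nontrivial_rep D V \<psi>"
    and v: "v \<in> carrier V" and fixed: "\<And>g. g \<in> carrier D \<Longrightarrow> \<psi> g v = v"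
  shows "v = \<one>\<^bsub>V\<^esub>"
proof -
  define W where "W = {w \<in> carrier V. \<forall>g\<in>carrier D. \<psi> g w = w}"
  have "subgroup W V"
  proof (rule V.subgroupI)
    show "W \<subseteq> carrier V" by (simp add: W_def)
    show "W \<noteq> {}" using V.one_closed by (force simp: W_def)
  next
    fix w assume "w \<in> W"
    moreover have "\<psi> g (inv\<^bsub>V\<^esub> w) = inv\<^bsub>V\<^esub> (\<psi> g w)" if "g \<in> carrier D" "w \<in> carrier V" for g
      using \<psi>_auto[OF that(1)] that(2)
      by (simp add: auto_def group_hom.hom_inv group_hom_def group_hom_axioms_def)
    ultimately show "inv\<^bsub>V\<^esub> w \<in> W" by (simp add: W_def)
  next
    fix a b assume "a \<in> W" "b \<in> W"
    then show "a \<otimes>\<^bsub>V\<^esub> b \<in> W" by (simp add: W_def)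
  qed
  moreover have "\<psi> g ` W \<subseteq> W" if "g \<in> carrier D" for g
    using that by (auto simp: W_def)
  ultimately have "W = {\<one>\<^bsub>V\<^esub>} \<or> W = carrier V"
    using irr by (simp add: irreducible_rep_def)
  moreover have "W \<noteq> carrier V"
  proof
    assume W: "W = carrier V"
    obtain g where g: "g \<in> carrier D" and ng: "\<psi> g \<noteq> \<one>\<^bsub>AutoGroup V\<^esub>"
      using nontriv by (auto simp: nontrivial_rep_def)
    have "\<psi> g \<in> extensional (carrier V)"
      using \<psi>_auto[OF g] by (simp add: auto_def Bij_def)
    moreover have "\<psi> g x = x" if "x \<in> carrier V" for x
    proof -
      have "x \<in> W" using that W by simp
      then show ?thesis using g by (simp add: W_def)
    qed
    ultimately have "\<psi> g = (\<lambda>x\<in>carrier V. x)"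
      by (intro extensionalityI[of _ "carrier V"]) auto
    then show False using ng by (simp add: one_AutoGroup)
  qed
  ultimately have "W = {\<one>\<^bsub>V\<^esub>}" by blast
  moreover have "v \<in> W" using v fixed by (simp add: W_def)
  ultimately show ?thesis by blast
qed

theorem Aut_semidirect_decomposition:
  assumes "comm_group V"
    and "\<And>v. v \<in> carrier V \<Longrightarrow> v [^]\<^bsub>V\<^esub> p = \<one>\<^bsub>V\<^esub>"
    and "finite (carrier D)" and "coprime p (card (carrier D))"
    and "\<And>v. v \<in> carrier V \<Longrightarrow> (\<And>g. g \<in> carrier D \<Longrightarrow> \<psi> g v = v) \<Longrightarrow> v = \<one>\<^bsub>V\<^esub>"
  shows "internal_semidirect (AutoGroup SD) (Inn_of SD (carrier V \<times> {\<one>\<^bsub>D\<^esub>}))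
           (aut_normalizer SD ({\<one>\<^bsub>V\<^esub>} \<times> carrier D))"
    and "V \<cong> (AutoGroup SD)\<lparr>carrier := Inn_of SD (carrier V \<times> {\<one>\<^bsub>D\<^esub>})\<rparr>"
proof -
  interpret C: coprime_abelian_complement SD "carrier V \<times> {\<one>\<^bsub>D\<^esub>}" "{\<one>\<^bsub>V\<^esub>} \<times> carrier D" p
    by (rule coprime_abelian_complement_semidirect[OF assms])
  show "internal_semidirect (AutoGroup SD) (Inn_of SD (carrier V \<times> {\<one>\<^bsub>D\<^esub>}))
          (aut_normalizer SD ({\<one>\<^bsub>V\<^esub>} \<times> carrier D))"
    by (rule C.internal_semidirect_Inn_of_aut_normalizer)
  show "V \<cong> (AutoGroup SD)\<lparr>carrier := Inn_of SD (carrier V \<times> {\<one>\<^bsub>D\<^esub>})\<rparr>"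
    using iso_V C.V_iso_Inn_of by (rule iso_trans)
qed

end

lemma comm_group_Zp_vec: "p > 0 \<Longrightarrow> comm_group (Zp_vec p d)"
proof (rule comm_groupI)
  fix x assume "p > 0" and x: "x \<in> carrier (Zp_vec p d)"
  then have "(\<lambda>i. (- x i) mod int p) \<otimes>\<^bsub>Zp_vec p d\<^esub> x = \<one>\<^bsub>Zp_vec p d\<^esub>"
    and "(\<lambda>i. (- x i) mod int p) \<in> carrier (Zp_vec p d)"
    by (simp_all add: Zp_vec_def mod_simps)
  then show "\<exists>y\<in>carrier (Zp_vec p d). y \<otimes>\<^bsub>Zp_vec p d\<^esub> x = \<one>\<^bsub>Zp_vec p d\<^esub>" by blast
next
  fix x assume x: "x \<in> carrier (Zp_vec p d)"
  have "(\<one>\<^bsub>Zp_vec p d\<^esub> \<otimes>\<^bsub>Zp_vec p d\<^esub> x) i = x i" for i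
    using x by (cases "i < d") (simp_all add: Zp_vec_def)
  then show "\<one>\<^bsub>Zp_vec p d\<^esub> \<otimes>\<^bsub>Zp_vec p d\<^esub> x = x" by blast
qed (auto simp: Zp_vec_def mod_simps ac_simps)

lemma Zp_vec_pow: "v [^]\<^bsub>Zp_vec p d\<^esub> (n::nat) = (\<lambda>i. (int n * v i) mod int p)"
  by (induction n) (simp_all add: Zp_vec_def mod_simps algebra_simps)

lemma Zp_vec_pow_p: "v [^]\<^bsub>Zp_vec p d\<^esub> p = \<one>\<^bsub>Zp_vec p d\<^esub>"
  unfolding Zp_vec_pow by (simp add: Zp_vec_def)

lemma group_dihedral_group: "r > 0 \<Longrightarrow> group (dihedral_group r)"
proof (rule groupI)
  fix x y z
  show "x \<otimes>\<^bsub>dihedral_group r\<^esub> y \<otimes>\<^bsub>dihedral_group r\<^esub> z = x \<otimes>\<^bsub>dihedral_group r\<^esub> (y \<otimes>\<^bsub>dihedral_group r\<^esub> z)"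
    by (cases x; cases y; cases z)
       (auto simp: dihedral_group_def mod_simps algebra_simps)
next
  fix x assume "r > 0" and "x \<in> carrier (dihedral_group r)"
  then obtain a s where x: "x = (a, s)" "0 \<le> a" "a < int r"
    by (cases x) (auto simp: dihedral_group_def)
  define y where "y = (if s then (a, True) else ((- a) mod int r, False))"
  have "y \<in> carrier (dihedral_group r)" and "y \<otimes>\<^bsub>dihedral_group r\<^esub> x = \<one>\<^bsub>dihedral_group r\<^esub>"
    using x \<open>r > 0\<close> by (auto simp: y_def dihedral_group_def mod_simps)
  then show "\<exists>y\<in>carrier (dihedral_group r). y \<otimes>\<^bsub>dihedral_group r\<^esub> x = \<one>\<^bsub>dihedral_group r\<^esub>"
    by blast
qed (auto simp: dihedral_group_def)

lemma card_dihedral_group: "card (carrier (dihedral_group r)) = 2 * r"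
  by (simp add: dihedral_group_def card_cartesian_product)

lemma finite_dihedral_group: "finite (carrier (dihedral_group r))"
  by (simp add: dihedral_group_def)

theorem lemma5p1:
  fixes p r d :: nat and \<psi> :: "int \<times> bool \<Rightarrow> (nat \<Rightarrow> int) \<Rightarrow> (nat \<Rightarrow> int)"
  assumes "prime p" and "odd p" and "r \<ge> 3" and "\<not> p dvd r"
    and "\<psi> \<in> hom (dihedral_group r) (AutoGroup (Zp_vec p d))"
    and "irreducible_rep (dihedral_group r) (Zp_vec p d) \<psi>"
    and "nontrivial_rep (dihedral_group r) (Zp_vec p d) \<psi>"
  shows "internal_semidirect (AutoGroup (semidirect (Zp_vec p d) (dihedral_group r) \<psi>))
           (Inn_of (semidirect (Zp_vec p d) (dihedral_group r) \<psi>) (carrier (Zp_vec p d) \<times> {(0, False)}))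
           (aut_normalizer (semidirect (Zp_vec p d) (dihedral_group r) \<psi>) ({\<lambda>i. 0} \<times> carrier (dihedral_group r)))
       \<and> Zp_vec p d \<cong> (AutoGroup (semidirect (Zp_vec p d) (dihedral_group r) \<psi>))
           \<lparr>carrier := Inn_of (semidirect (Zp_vec p d) (dihedral_group r) \<psi>) (carrier (Zp_vec p d) \<times> {(0, False)})\<rparr>"
proof -
  have p: "p > 0" and r: "r > 0" using assms(1,3) by (simp_all add: prime_gt_0_nat)
  interpret semidirect_product "Zp_vec p d" "dihedral_group r" \<psi>
    using comm_group.axioms(2)[OF comm_group_Zp_vec[OF p]] group_dihedral_group[OF r] assms(5)
    by (intro semidirect_product.intro semidirect_product_axioms.intro)
  have "coprime p (card (carrier (dihedral_group r)))"
    using assms(1,2,4) by (simp add: card_dihedral_group prime_imp_coprime prime_dvd_mult_iff)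
  moreover have "\<one>\<^bsub>dihedral_group r\<^esub> = (0, False)" and "\<one>\<^bsub>Zp_vec p d\<^esub> = (\<lambda>i. 0)"
    by (simp_all add: dihedral_group_def Zp_vec_def)
  ultimately show ?thesis
    using Aut_semidirect_decomposition[OF comm_group_Zp_vec[OF p] Zp_vec_pow_p finite_dihedral_group]
      no_fixed_points_if_irreducible[OF assms(6,7)]
    by simp
qed

end
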